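(* Let $n\ge1$ and consider $n$ elements with states ${\bf x}_i(t)\in\mathbb{R}^m$ and dynamics $$\dot{\bf x}_i(t)=\sum_{j\in\mathcal{N}_i}{\bf K}_{ji}\big({\bf x}_j(t-T_{ji})-{\bf x}_i(t)\big),\qquad i=1,\dots,n,$$ where $\mathcal{N}_i\subseteq\{1,\dots,n\}\setminus\{i\}$ is a fixed set of neighbors of $i$, each ${\bf K}_{ji}$ is a constant symmetric positive definite $m\times m$ matrix, and each $T_{ji}\ge0$ is a constant delay (delays may differ from link to link and between the two directions of a link). Assume the network (directed graph with an edge $j\to i$ whenever $j\in\mathcal{N}_i$) is connected, and that the links are either bidirectional with ${\bf K}_{ji}={\bf K}_{ij}$, or unidirectional but formed into closed rings with identical gains within each ring (or a mixture of both types). Then, regardless of the values of the delays and of the (continuous) initial functions, every solution asymptotically reaches group agreement: ${\bf x}_i(t)-{\bf x}_j(t)\to0$ as $t\to\infty$ for all $i,j$. *)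

theory Defs
  imports "HOL-Analysis.Analysis"
begin

text \<open>Nodes are the naturals 0,...,n-1.  Node j is a neighbour of node i iff j \<in> N i,
  which gives a directed link (edge) from j to i, represented as the pair (j, i).\<close>

definition link :: "(nat \<Rightarrow> nat set) \<Rightarrow> nat \<Rightarrow> nat \<Rightarrow> nat \<Rightarrow> bool" where
  "link N n j i \<longleftrightarrow> i < n \<and> j \<in> N i"

definition network_connected :: "(nat \<Rightarrow> nat set) \<Rightarrow> nat \<Rightarrow> bool" where
  "network_connected N n \<longleftrightarrow>
     (\<forall>i<n. \<forall>j<n. (\<lambda>a b. link N n a b \<or> link N n b a)\<^sup>*\<^sup>* i j)"

definition sym_posdef :: "real^'m^'m \<Rightarrow> bool" where
  "sym_posdef A \<longleftrightarrow> transpose A = A \<and> (\<forall>v. v \<noteq> 0 \<longrightarrow> 0 < v \<bullet> (A *v v))"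

definition ring_edges :: "nat list \<Rightarrow> (nat \<times> nat) set" where
  "ring_edges vs = {(vs ! k, vs ! ((k + 1) mod length vs)) | k. k < length vs}"

definition is_ring :: "(nat \<Rightarrow> nat set) \<Rightarrow> nat \<Rightarrow> nat list \<Rightarrow> bool" where
  "is_ring N n vs \<longleftrightarrow> distinct vs \<and> 2 \<le> length vs \<and> set vs \<subseteq> {..<n}
     \<and> (\<forall>(a, b) \<in> ring_edges vs. link N n a b)"

definition unidir_links :: "(nat \<Rightarrow> nat set) \<Rightarrow> nat \<Rightarrow> (nat \<times> nat) set" where
  "unidir_links N n = {(j, i). link N n j i \<and> \<not> link N n i j}"

definition admissible_links ::
  "(nat \<Rightarrow> nat set) \<Rightarrow> nat \<Rightarrow> (nat \<Rightarrow> nat \<Rightarrow> real^'m^'m) \<Rightarrow> bool" where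
  "admissible_links N n K \<longleftrightarrow>
     (\<forall>i j. link N n j i \<and> link N n i j \<longrightarrow> K j i = K i j) \<and>
     (\<exists>R. (\<forall>r\<in>R. is_ring N n r \<and> (\<exists>K0. \<forall>(a, b) \<in> ring_edges r. K a b = K0)) \<and>
          (\<forall>r\<in>R. \<forall>r'\<in>R. r \<noteq> r' \<longrightarrow> ring_edges r \<inter> ring_edges r' = {}) \<and>
          (\<Union>r\<in>R. ring_edges r) = unidir_links N n)"

end

theory Submission
  imports Defs
begin

(* A Lyapunov-Krasovskii argument. Let V(t) be half the sum of the squared norms of the states
   plus, for every link j -> i, half the integral of x_j(s)' K_ji x_j(s) over the delay window
   [t - T_ji, t]. Along solutions, V' is minus half the sum over all links of
   e_ji' K_ji e_ji with e_ji(t) = x_i(t) - x_j(t - T_ji), plus half the sum over all links of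
   x_j' K_ji x_j - x_i' K_ji x_i; the latter vanishes because a bidirectional link contributes
   with both orientations and equal gains, and a ring with a common gain telescopes.
   So V is nonincreasing and nonnegative: the states and their derivatives stay bounded, and a
   Barbalat-type argument gives e_ji -> 0 on every link. Then all derivatives tend to 0, hence
   also x_j(t) - x_j(t - T_ji) -> 0, so x_i - x_j -> 0 across every link, and connectivity
   spreads the agreement over the whole network. *)

definition quadratic_form :: "real^'n^'n \<Rightarrow> real^'n \<Rightarrow> real" where
  "quadratic_form A v = v \<bullet> (A *v v)"

lemma symmetric_matrix_inner_commute:
  fixes A :: "real^'n^'n"
  assumes "transpose A = A"
  shows "v \<bullet> (A *v w) = w \<bullet> (A *v v)"
  by (metis assms dot_lmul_matrix inner_commute transpose_matrix_vector)

lemma symmetric_matrix_inner_diff: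
  fixes A :: "real^'n^'n"
  assumes "transpose A = A"
  shows "a \<bullet> (A *v (b - a)) =
    (quadratic_form A b - quadratic_form A a - quadratic_form A (a - b)) / 2"
  using symmetric_matrix_inner_commute[OF assms, of a b]
  by (simp add: quadratic_form_def matrix_vector_mult_diff_distrib inner_diff_left
      inner_diff_right algebra_simps)

lemma quadratic_form_coercive:
  fixes A :: "real^'n^'n"
  assumes pos: "\<And>v. v \<noteq> 0 \<Longrightarrow> 0 < quadratic_form A v"
  obtains c where "0 < c" "\<And>v. c * (norm v)\<^sup>2 \<le> quadratic_form A v"
proof -
  have "continuous_on (sphere 0 1) (quadratic_form A)"
    unfolding quadratic_form_def by (intro continuous_intros linear_continuous_on) auto
  then obtain u where u: "u \<in> sphere 0 1"
    and min: "\<And>v. v \<in> sphere 0 1 \<Longrightarrow> quadratic_form A u \<le> quadratic_form A v"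
    using continuous_attains_inf[OF compact_sphere, of 0 1 "quadratic_form A"] by auto
  have "quadratic_form A u * (norm v)\<^sup>2 \<le> quadratic_form A v" for v
  proof (cases "v = 0")
    case False
    have "quadratic_form A u \<le> quadratic_form A (inverse (norm v) *\<^sub>R v)"
      using False by (intro min) simp
    also have "\<dots> = quadratic_form A v / (norm v)\<^sup>2"
      by (simp add: quadratic_form_def matrix_vector_mult_scaleR power2_eq_square field_simps)
    finally show ?thesis
      using False by (simp add: field_simps)
  qed (simp add: quadratic_form_def)
  moreover have "0 < quadratic_form A u"
    using u pos by (metis mem_sphere_0 norm_zero zero_neq_one)
  ultimately show thesis
    using that by blast
qed

lemma sym_posdef_quadratic_form_nonneg:
  assumes "sym_posdef A"
  shows "0 \<le> quadratic_form A v"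
  using assms by (cases "v = 0") (auto simp: sym_posdef_def quadratic_form_def less_imp_le)

lemma ring_edges_sum_telescope:
  fixes f :: "nat \<Rightarrow> 'a::ab_group_add"
  assumes "distinct vs"
  shows "(\<Sum>(a, b)\<in>ring_edges vs. f a - f b) = 0"
proof -
  let ?L = "length vs"
  let ?succ = "\<lambda>k. (k + 1) mod ?L"
  have edges: "ring_edges vs = (\<lambda>k. (vs ! k, vs ! ?succ k)) ` {..<?L}"
    unfolding ring_edges_def by auto
  have "inj_on (\<lambda>k. (vs ! k, vs ! ?succ k)) {..<?L}"
    using assms by (auto simp: inj_on_def nth_eq_iff_index_eq)
  then have "(\<Sum>(a, b)\<in>ring_edges vs. f a - f b) = (\<Sum>k<?L. f (vs ! k)) - (\<Sum>k<?L. f (vs ! ?succ k))"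
    unfolding edges by (simp add: sum.reindex sum_subtractf)
  also have "(\<Sum>k<?L. f (vs ! ?succ k)) = (\<Sum>k<?L. f (vs ! k))"
  proof -
    have "bij_betw ?succ {..<?L} {..<?L}"
    proof (cases "?L = 0")
      case False
      then have "inj_on ?succ {..<?L}"
        by (auto simp: inj_on_def mod_Suc split: if_splits)
      with False show ?thesis
        by (simp add: bij_betw_def endo_inj_surj image_subset_iff)
    qed simp
    then show ?thesis
      by (rule sum.reindex_bij_betw)
  qed
  finally show ?thesis by simp
qed

lemma sum_swap_closed_links_cancel:
  fixes f :: "'k \<Rightarrow> 'i \<Rightarrow> 'a::ab_group_add"
  assumes swap: "prod.swap ` B = B"
    and sym: "\<And>j i. (j, i) \<in> B \<Longrightarrow> K j i = K i j"
  shows "(\<Sum>(j, i)\<in>B. f (K j i) j - f (K j i) i) = 0"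
proof -
  have "(\<Sum>(j, i)\<in>B. f (K j i) i) = (\<Sum>(j, i)\<in>prod.swap ` B. f (K j i) i)"
    using swap by simp
  also have "\<dots> = (\<Sum>(j, i)\<in>B. f (K i j) j)"
    by (simp add: sum.reindex case_prod_unfold)
  also have "\<dots> = (\<Sum>(j, i)\<in>B. f (K j i) j)"
    by (intro sum.cong refl) (metis (no_types, lifting) case_prod_unfold prod.collapse sym)
  finally show ?thesis
    by (simp add: sum_subtractf case_prod_unfold)
qed

lemma sum_ring_edges_cancel:
  fixes f :: "'k \<Rightarrow> nat \<Rightarrow> 'a::ab_group_add"
  assumes rings: "\<And>r. r \<in> R \<Longrightarrow> distinct r \<and> (\<exists>K0. \<forall>(a, b)\<in>ring_edges r. K a b = K0)"
    and disj: "\<And>r r'. r \<in> R \<Longrightarrow> r' \<in> R \<Longrightarrow> r \<noteq> r' \<Longrightarrow> ring_edges r \<inter> ring_edges r' = {}"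
    and fin: "finite (\<Union>r\<in>R. ring_edges r)"
  shows "(\<Sum>(j, i)\<in>(\<Union>r\<in>R. ring_edges r). f (K j i) j - f (K j i) i) = 0"
proof -
  let ?F = "\<lambda>(j, i). f (K j i) j - f (K j i) i"
  have "\<forall>E\<in>ring_edges ` R. finite E"
    using fin by (auto intro: finite_subset)
  moreover have "\<forall>E\<in>ring_edges ` R. \<forall>E'\<in>ring_edges ` R. E \<noteq> E' \<longrightarrow> E \<inter> E' = {}"
    using disj by blast
  ultimately have "sum ?F (\<Union>(ring_edges ` R)) = sum (sum ?F) (ring_edges ` R)"
    by (simp add: sum.Union_disjoint)
  also have "\<dots> = 0"
  proof (rule sum.neutral, rule ballI)
    fix E assume "E \<in> ring_edges ` R"
    then obtain r K0 where r: "r \<in> R" "E = ring_edges r" and K0: "\<forall>(a, b)\<in>E. K a b = K0"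
      using rings by blast
    have "sum ?F E = (\<Sum>(a, b)\<in>ring_edges r. f K0 a - f K0 b)"
      using K0 r by (intro sum.cong) auto
    also have "\<dots> = 0"
      using rings[OF r(1)] by (intro ring_edges_sum_telescope) simp
    finally show "sum ?F E = 0" .
  qed
  finally show ?thesis
    by simp
qed

lemma admissible_links_sum_cancel:
  fixes f :: "real^'m^'m \<Rightarrow> nat \<Rightarrow> 'a::ab_group_add"
  assumes adm: "admissible_links N n K"
    and fin: "finite {(j, i). link N n j i}"
  shows "(\<Sum>(j, i)\<in>{(j, i). link N n j i}. f (K j i) j - f (K j i) i) = 0"
proof -
  let ?F = "\<lambda>(j, i). f (K j i) j - f (K j i) i"
  define B where "B = {(j, i). link N n j i \<and> link N n i j}"
  obtain R where rings: "\<forall>r\<in>R. is_ring N n r \<and> (\<exists>K0. \<forall>(a, b)\<in>ring_edges r. K a b = K0)"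
    and disj: "\<forall>r\<in>R. \<forall>r'\<in>R. r \<noteq> r' \<longrightarrow> ring_edges r \<inter> ring_edges r' = {}"
    and cover: "(\<Union>r\<in>R. ring_edges r) = unidir_links N n"
    using adm unfolding admissible_links_def by (elim conjE exE)
  have split: "{(j, i). link N n j i} = B \<union> (\<Union>r\<in>R. ring_edges r)" "B \<inter> (\<Union>r\<in>R. ring_edges r) = {}"
    unfolding cover B_def unidir_links_def by auto
  have "sum ?F B = 0"
    using adm unfolding admissible_links_def B_def
    by (intro sum_swap_closed_links_cancel) (auto simp: image_iff)
  moreover have "sum ?F (\<Union>r\<in>R. ring_edges r) = 0"
    using rings disj fin split(1) by (intro sum_ring_edges_cancel) (auto simp: is_ring_def)
  ultimately show ?thesis
    using fin unfolding split(1) by (simp add: sum.union_disjoint split(2))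
qed

lemma sum_neighbours_eq_sum_links:
  assumes "\<And>i. i < n \<Longrightarrow> finite (N i)"
  shows "(\<Sum>i<n. \<Sum>j\<in>N i. F j i) = (\<Sum>(j, i)\<in>{(j, i). link N n j i}. F j i)"
proof -
  have "(\<Sum>i<n. \<Sum>j\<in>N i. F j i) = (\<Sum>(i, j)\<in>Sigma {..<n} N. F j i)"
    using assms by (intro sum.Sigma) auto
  also have "\<dots> = (\<Sum>(j, i)\<in>prod.swap ` Sigma {..<n} N. F j i)"
    by (simp add: sum.reindex case_prod_unfold)
  also have "prod.swap ` Sigma {..<n} N = {(j, i). link N n j i}"
    by (auto simp: link_def image_iff)
  finally show ?thesis .
qed

lemma bounded_vector_derivative_imp_lipschitz:
  fixes f :: "real \<Rightarrow> 'a::real_normed_vector"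
  assumes "\<And>t. t \<in> S \<Longrightarrow> (f has_vector_derivative f' t) (at t within S)"
    and "convex S"
    and "\<And>t. t \<in> S \<Longrightarrow> norm (f' t) \<le> B"
    and "0 \<le> B"
  shows "B-lipschitz_on S f"
  using assms unfolding has_vector_derivative_def
  by (intro bounded_derivative_imp_lipschitz[where f'="\<lambda>t h. h *\<^sub>R f' t"])
    (auto simp: onorm_scaleR_left[OF bounded_linear_ident] onorm_id)

lemma integral_has_real_derivative_at:
  assumes "continuous_on {a..} g" "a < t"
  shows "((\<lambda>u. integral {a..u} g) has_real_derivative g t) (at t)"
proof -
  have "((\<lambda>u. integral {a..u} g) has_real_derivative g t) (at t within {a..t + 1})"
    using assms by (intro integral_has_real_derivative continuous_on_subset[OF assms(1)]) auto
  moreover have "at t within {a..t + 1} = at t"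
    using assms by (intro at_within_Icc_at) auto
  ultimately show ?thesis by simp
qed

lemma tendsto_Inf_if_antimono_bdd_below:
  fixes V :: "real \<Rightarrow> real"
  assumes anti: "\<And>s t. a \<le> s \<Longrightarrow> s \<le> t \<Longrightarrow> V t \<le> V s"
    and bdd: "\<And>t. a \<le> t \<Longrightarrow> B \<le> V t"
  shows "(V \<longlongrightarrow> Inf (V ` {a..})) at_top"
proof -
  have bdd_below: "bdd_below (V ` {a..})"
    using bdd by (metis atLeast_iff bdd_belowI2)
  show ?thesis
  proof (rule order_tendstoI)
    fix y assume "y < Inf (V ` {a..})"
    moreover have "Inf (V ` {a..}) \<le> V t" if "a \<le> t" for t
      using bdd_below that by (auto intro: cInf_lower)
    ultimately show "\<forall>\<^sub>F t in at_top. y < V t"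
      unfolding eventually_at_top_linorder by (meson order_less_le_trans)
  next
    fix y assume "Inf (V ` {a..}) < y"
    then obtain s where "a \<le> s" "V s < y"
      using bdd_below by (subst (asm) cInf_less_iff) auto
    then show "\<forall>\<^sub>F t in at_top. V t < y"
      unfolding eventually_at_top_linorder by (meson anti order_le_less_trans)
  qed
qed

lemma dissipation_decrease:
  fixes V V' :: "real \<Rightarrow> real" and w :: "real \<Rightarrow> 'a::real_normed_vector"
  assumes deriv: "\<And>u. t \<le> u \<Longrightarrow> u \<le> t + h \<Longrightarrow> (V has_real_derivative V' u) (at u)"
    and dissip: "\<And>u. t \<le> u \<Longrightarrow> u \<le> t + h \<Longrightarrow> V' u \<le> - c * (norm (w u))\<^sup>2"
    and away: "\<And>u. t \<le> u \<Longrightarrow> u \<le> t + h \<Longrightarrow> r \<le> norm (w u)"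
    and "0 \<le> c" "0 \<le> r" "0 \<le> h"
  shows "V (t + h) \<le> V t - c * r\<^sup>2 * h"
proof -
  have "V' u + c * r\<^sup>2 \<le> 0" if "t \<le> u" "u \<le> t + h" for u
  proof -
    have "c * r\<^sup>2 \<le> c * (norm (w u))\<^sup>2"
      using away[OF that] \<open>0 \<le> c\<close> \<open>0 \<le> r\<close> by (simp add: mult_left_mono power_mono)
    then show ?thesis
      using dissip[OF that] by linarith
  qed
  then have "V (t + h) + c * r\<^sup>2 * (t + h) \<le> V t + c * r\<^sup>2 * t"
    using \<open>0 \<le> h\<close>
  proof (intro DERIV_nonpos_imp_nonincreasing[of t "t + h"] exI conjI)
    fix u assume "t \<le> u" "u \<le> t + h"
    then show "((\<lambda>u. V u + c * r\<^sup>2 * u) has_real_derivative V' u + c * r\<^sup>2) (at u)"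
      using deriv by (auto intro!: derivative_eq_intros)
  qed auto
  then show ?thesis
    by (simp add: algebra_simps)
qed

lemma tendsto_zero_if_dissipation:
  fixes V V' :: "real \<Rightarrow> real" and w :: "real \<Rightarrow> 'a::real_normed_vector"
  assumes deriv: "\<And>t. a \<le> t \<Longrightarrow> (V has_real_derivative V' t) (at t)"
    and dissip: "\<And>t. a \<le> t \<Longrightarrow> V' t \<le> - c * (norm (w t))\<^sup>2"
    and "0 < c"
    and bdd: "\<And>t. a \<le> t \<Longrightarrow> B \<le> V t"
    and unif: "uniformly_continuous_on {a..} w"
  shows "(w \<longlongrightarrow> 0) at_top"
proof (rule tendstoI)
  fix \<epsilon> :: real assume "0 < \<epsilon>"
  have anti: "V t \<le> V s" if "a \<le> s" "s \<le> t" for s t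
    using dissipation_decrease[of s "t - s" V V' c w 0] deriv dissip that \<open>0 < c\<close> by simp
  obtain \<delta> where "0 < \<delta>"
    and close: "\<And>s u. s \<in> {a..} \<Longrightarrow> u \<in> {a..} \<Longrightarrow> dist u s < \<delta> \<Longrightarrow> dist (w u) (w s) < \<epsilon> / 2"
    using unif \<open>0 < \<epsilon>\<close> unfolding uniformly_continuous_on_def by (meson half_gt_zero)
  define h where "h = \<delta> / 2"
  define \<kappa> where "\<kappa> = c * (\<epsilon> / 2)\<^sup>2 * h"
  have "0 < h" "0 < \<kappa>"
    using \<open>0 < \<delta>\<close> \<open>0 < \<epsilon>\<close> \<open>0 < c\<close> by (auto simp: h_def \<kappa>_def)
  have drop: "V (t + h) \<le> V t - \<kappa>" if "a \<le> t" "\<epsilon> \<le> norm (w t)" for t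
  proof -
    have "\<epsilon> / 2 \<le> norm (w u)" if "t \<le> u" "u \<le> t + h" for u
    proof -
      have "dist (w u) (w t) < \<epsilon> / 2"
        using close \<open>a \<le> t\<close> that \<open>0 < \<delta>\<close> by (simp add: h_def dist_real_def)
      then show ?thesis
        using \<open>\<epsilon> \<le> norm (w t)\<close> norm_triangle_ineq3[of "w t" "w u"]
        by (simp add: dist_norm norm_minus_commute)
    qed
    then show ?thesis
      unfolding \<kappa>_def using deriv dissip \<open>a \<le> t\<close> \<open>0 < c\<close> \<open>0 < \<epsilon>\<close> \<open>0 < h\<close>
      by (intro dissipation_decrease[where V' = V']) auto
  qed
  have lim: "(V \<longlongrightarrow> Inf (V ` {a..})) at_top"
    using anti bdd by (rule tendsto_Inf_if_antimono_bdd_below)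
  moreover have "((\<lambda>t. V (h + t)) \<longlongrightarrow> Inf (V ` {a..})) at_top"
    using filterlim_compose[OF lim filterlim_tendsto_add_at_top[OF tendsto_const filterlim_ident]] .
  ultimately have "((\<lambda>t. V t - V (h + t)) \<longlongrightarrow> Inf (V ` {a..}) - Inf (V ` {a..})) at_top"
    by (rule tendsto_diff)
  then have "\<forall>\<^sub>F t in at_top. V t - V (h + t) < \<kappa>"
    using \<open>0 < \<kappa>\<close> by (intro order_tendstoD(2)) auto
  moreover have "\<forall>\<^sub>F t in at_top. a \<le> t"
    by (rule eventually_ge_at_top)
  ultimately show "\<forall>\<^sub>F t in at_top. dist (w t) 0 < \<epsilon>"
  proof eventually_elim
    case (elim t)
    then show ?case
      using drop[of t] by (auto simp: add.commute not_le[symmetric])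
  qed
qed

lemma tendsto_shift_diff_if_derivative_tendsto_zero:
  fixes f :: "real \<Rightarrow> 'a::real_normed_vector"
  assumes deriv: "\<And>t. a < t \<Longrightarrow> (f has_vector_derivative f' t) (at t)"
    and lim: "(f' \<longlongrightarrow> 0) at_top"
    and "0 \<le> h"
  shows "((\<lambda>t. f t - f (t - h)) \<longlongrightarrow> 0) at_top"
proof (rule tendstoI)
  fix \<epsilon> :: real assume "0 < \<epsilon>"
  define \<eta> where "\<eta> = \<epsilon> / (h + 1)"
  have "0 < \<eta>" "\<eta> * h < \<epsilon>"
    using \<open>0 < \<epsilon>\<close> \<open>0 \<le> h\<close> by (simp_all add: \<eta>_def field_simps)
  obtain b where small: "\<And>t. b \<le> t \<Longrightarrow> norm (f' t) < \<eta>"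
    using tendstoD[OF lim \<open>0 < \<eta>\<close>] unfolding eventually_at_top_linorder dist_norm by auto
  define b' where "b' = max b (a + 1)"
  have "\<eta>-lipschitz_on {b'..} f"
    using deriv small \<open>0 < \<eta>\<close>
    by (intro bounded_vector_derivative_imp_lipschitz)
      (auto simp: b'_def intro: has_vector_derivative_at_within less_imp_le)
  then have "norm (f t - f (t - h)) \<le> \<eta> * h" if "b' + h \<le> t" for t
    using that \<open>0 \<le> h\<close> lipschitz_on_normD[of \<eta> "{b'..}" f t "t - h"] by simp
  then have "dist (f t - f (t - h)) 0 < \<epsilon>" if "b' + h \<le> t" for t
    using that \<open>\<eta> * h < \<epsilon>\<close> by (simp add: dist_norm) (meson order_le_less_trans)
  then show "\<forall>\<^sub>F t in at_top. dist (f t - f (t - h)) 0 < \<epsilon>"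
    unfolding eventually_at_top_linorder by blast
qed

lemma tendsto_diff_zero_along_symmetric_path:
  fixes f :: "'i \<Rightarrow> 'b \<Rightarrow> 'a::topological_ab_group_add"
  assumes "(\<lambda>a b. P a b \<or> P b a)\<^sup>*\<^sup>* i j"
    and edge: "\<And>a b. P a b \<Longrightarrow> ((\<lambda>t. f a t - f b t) \<longlongrightarrow> 0) F"
  shows "((\<lambda>t. f i t - f j t) \<longlongrightarrow> 0) F"
  using assms(1)
proof (induction rule: rtranclp_induct)
  case base
  then show ?case by simp
next
  case (step k l)
  have "((\<lambda>t. f k t - f l t) \<longlongrightarrow> 0) F"
    using step(2) edge tendsto_minus[OF edge[of l k]] by auto
  from tendsto_add[OF step(3) this] show ?case
    by simp
qed

lemma inner_self_has_real_derivative: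
  fixes f :: "real \<Rightarrow> 'a::real_inner"
  assumes "(f has_vector_derivative v) (at t)"
  shows "((\<lambda>t. f t \<bullet> f t) has_real_derivative 2 * (f t \<bullet> v)) (at t)"
proof -
  have "((\<lambda>t. f t \<bullet> f t) has_derivative (\<lambda>h. f t \<bullet> (h *\<^sub>R v) + (h *\<^sub>R v) \<bullet> f t)) (at t)"
    using assms unfolding has_vector_derivative_def by (intro has_derivative_inner)
  moreover have "(\<lambda>h. f t \<bullet> (h *\<^sub>R v) + (h *\<^sub>R v) \<bullet> f t) = (\<lambda>h. 2 * (f t \<bullet> v) * h)"
    by (auto simp: inner_commute algebra_simps)
  ultimately show ?thesis
    by (simp add: has_field_derivative_def)
qed

locale delayed_network =
  fixes n :: nat
    and N :: "nat \<Rightarrow> nat set"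
    and K :: "nat \<Rightarrow> nat \<Rightarrow> real^'m^'m"
    and T :: "nat \<Rightarrow> nat \<Rightarrow> real"
    and \<tau> :: real
    and x :: "nat \<Rightarrow> real \<Rightarrow> real^'m"
  assumes nbrs: "\<forall>i<n. N i \<subseteq> {0..<n} - {i}"
    and gains: "\<forall>i<n. \<forall>j\<in>N i. sym_posdef (K j i)"
    and delays: "\<forall>i<n. \<forall>j\<in>N i. 0 \<le> T j i \<and> T j i \<le> \<tau>"
    and links: "admissible_links N n K"
    and cont: "\<forall>i<n. continuous_on {-\<tau>..} (x i)"
    and dyn: "\<forall>i<n. \<forall>t>0.
               (x i has_vector_derivative
                  (\<Sum>j\<in>N i. K j i *v (x j (t - T j i) - x i t))) (at t)"
begin

definition edges :: "(nat \<times> nat) set" where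
  "edges = {(j, i). link N n j i}"

definition drift :: "nat \<Rightarrow> real \<Rightarrow> real^'m" where
  "drift i t = (\<Sum>j\<in>N i. K j i *v (x j (t - T j i) - x i t))"

definition lag_error :: "nat \<Rightarrow> nat \<Rightarrow> real \<Rightarrow> real^'m" where
  "lag_error j i t = x i t - x j (t - T j i)"

definition stored_energy :: "nat \<Rightarrow> nat \<Rightarrow> real \<Rightarrow> real" where
  "stored_energy j i t = integral {-\<tau>..t} (\<lambda>s. quadratic_form (K j i) (x j s))"

definition lyapunov :: "real \<Rightarrow> real" where
  "lyapunov t = (\<Sum>i<n. x i t \<bullet> x i t) / 2
     + (\<Sum>(j, i)\<in>edges. stored_energy j i t - stored_energy j i (t - T j i)) / 2"

lemma link_nodes:
  assumes "link N n j i"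
  shows "i < n" "j < n" "j \<in> N i"
  using assms nbrs unfolding link_def by force+

lemma finite_edges: "finite edges"
proof -
  have "edges \<subseteq> {..<n} \<times> {..<n}"
    using link_nodes by (auto simp: edges_def)
  then show ?thesis
    by (rule finite_subset) simp
qed

lemma link_gain_sym_posdef: "link N n j i \<Longrightarrow> sym_posdef (K j i)"
  using gains link_nodes by blast

lemma link_delay_bounds: "link N n j i \<Longrightarrow> 0 \<le> T j i \<and> T j i \<le> \<tau>"
  using delays link_nodes by blast

lemma state_has_derivative: "i < n \<Longrightarrow> 0 < t \<Longrightarrow> (x i has_vector_derivative drift i t) (at t)"
  using dyn unfolding drift_def by blast

lemma stored_energy_has_derivative:
  assumes "link N n j i" "-\<tau> < t"
  shows "(stored_energy j i has_real_derivative quadratic_form (K j i) (x j t)) (at t)"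
proof -
  have x_cont: "continuous_on {-\<tau>..} (x j)"
    using cont link_nodes[OF assms(1)] by blast
  moreover have "continuous_on {-\<tau>..} (\<lambda>s. K j i *v x j s)"
    by (rule linear_continuous_on_compose[OF x_cont]) (simp add: matrix_vector_mul_linear)
  ultimately have "continuous_on {-\<tau>..} (\<lambda>s. quadratic_form (K j i) (x j s))"
    unfolding quadratic_form_def by (rule continuous_on_inner)
  then show ?thesis
    unfolding stored_energy_def[abs_def] using assms(2) by (rule integral_has_real_derivative_at)
qed

lemma sum_inner_drift:
  "(\<Sum>i<n. x i t \<bullet> drift i t) = (\<Sum>(j, i)\<in>edges.
     (quadratic_form (K j i) (x j (t - T j i)) - quadratic_form (K j i) (x i t)
      - quadratic_form (K j i) (lag_error j i t)) / 2)"
proof -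
  have "(\<Sum>i<n. x i t \<bullet> drift i t) = (\<Sum>i<n. \<Sum>j\<in>N i. x i t \<bullet> (K j i *v (x j (t - T j i) - x i t)))"
    by (simp add: drift_def inner_sum_right)
  also have "\<dots> = (\<Sum>(j, i)\<in>edges. x i t \<bullet> (K j i *v (x j (t - T j i) - x i t)))"
    unfolding edges_def using nbrs
    by (intro sum_neighbours_eq_sum_links) (meson finite_Diff finite_atLeastLessThan finite_subset)
  also have "\<dots> = (\<Sum>(j, i)\<in>edges.
     (quadratic_form (K j i) (x j (t - T j i)) - quadratic_form (K j i) (x i t)
      - quadratic_form (K j i) (lag_error j i t)) / 2)"
    using link_gain_sym_posdef
    by (intro sum.cong refl)
      (auto simp: edges_def lag_error_def sym_posdef_def symmetric_matrix_inner_diff)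
  finally show ?thesis .
qed

lemma links_quadratic_form_cancel:
  "(\<Sum>(j, i)\<in>edges. quadratic_form (K j i) (x j t) - quadratic_form (K j i) (x i t)) = 0"
  using admissible_links_sum_cancel[OF links, of "\<lambda>A k. quadratic_form A (x k t)"] finite_edges
  by (simp add: edges_def)

lemma stored_window_has_derivative:
  assumes "link N n j i" "0 < t"
  shows "((\<lambda>t. stored_energy j i t - stored_energy j i (t - T j i)) has_real_derivative
           quadratic_form (K j i) (x j t) - quadratic_form (K j i) (x j (t - T j i))) (at t)"
proof -
  have "-\<tau> < t + - T j i"
    using link_delay_bounds[OF assms(1)] assms(2) by simp
  then have "((\<lambda>s. stored_energy j i (s + - T j i)) has_real_derivative
      quadratic_form (K j i) (x j (t + - T j i))) (at t)"
    by (simp only: DERIV_shift[symmetric] stored_energy_has_derivative[OF assms(1)])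
  moreover have "(stored_energy j i has_real_derivative quadratic_form (K j i) (x j t)) (at t)"
    using stored_energy_has_derivative[OF assms(1)] link_delay_bounds[OF assms(1)] assms(2) by simp
  ultimately show ?thesis
    using DERIV_diff by fastforce
qed

lemma lyapunov_has_derivative:
  assumes "0 < t"
  shows "(lyapunov has_real_derivative
           - (\<Sum>(j, i)\<in>edges. quadratic_form (K j i) (lag_error j i t)) / 2) (at t)"
proof -
  let ?q = "\<lambda>j i s. quadratic_form (K j i) (x j s)"
  have "((\<lambda>t. \<Sum>i<n. x i t \<bullet> x i t) has_real_derivative (\<Sum>i<n. 2 * (x i t \<bullet> drift i t))) (at t)"
    using assms by (intro DERIV_sum inner_self_has_real_derivative state_has_derivative) auto
  moreover have "((\<lambda>t. \<Sum>(j, i)\<in>edges. stored_energy j i t - stored_energy j i (t - T j i))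
      has_real_derivative (\<Sum>(j, i)\<in>edges. ?q j i t - ?q j i (t - T j i))) (at t)"
    using assms by (intro DERIV_sum) (auto simp: edges_def intro: stored_window_has_derivative)
  ultimately have raw: "(lyapunov has_real_derivative (\<Sum>i<n. 2 * (x i t \<bullet> drift i t)) / 2
      + (\<Sum>(j, i)\<in>edges. ?q j i t - ?q j i (t - T j i)) / 2) (at t)"
    unfolding lyapunov_def[abs_def] by (intro DERIV_add DERIV_cdivide)
  have "(\<Sum>i<n. 2 * (x i t \<bullet> drift i t)) / 2
      + (\<Sum>(j, i)\<in>edges. ?q j i t - ?q j i (t - T j i)) / 2
    = (\<Sum>(j, i)\<in>edges. (?q j i t - ?q j i (t - T j i)) / 2 + (?q j i (t - T j i)
        - quadratic_form (K j i) (x i t) - quadratic_form (K j i) (lag_error j i t)) / 2)"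
    by (simp add: sum_inner_drift sum_distrib_left[symmetric] sum_divide_distrib sum.distrib
        case_prod_unfold)
  also have "\<dots> = (\<Sum>(j, i)\<in>edges. (?q j i t - quadratic_form (K j i) (x i t)) / 2
      - quadratic_form (K j i) (lag_error j i t) / 2)"
    by (intro sum.cong refl) (auto simp: field_simps)
  also have "\<dots> = - (\<Sum>(j, i)\<in>edges. quadratic_form (K j i) (lag_error j i t)) / 2"
    using links_quadratic_form_cancel[of t]
    by (simp add: sum_subtractf sum_divide_distrib[symmetric] case_prod_unfold)
  finally show ?thesis
    using raw by simp
qed

lemma quadratic_form_lag_error_nonneg:
  "(j, i) \<in> edges \<Longrightarrow> 0 \<le> quadratic_form (K j i) (lag_error j i t)"
  by (simp add: edges_def link_gain_sym_posdef sym_posdef_quadratic_form_nonneg)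

lemma lyapunov_antimono:
  assumes "0 < s" "s \<le> t"
  shows "lyapunov t \<le> lyapunov s"
proof (rule DERIV_nonpos_imp_nonincreasing[OF assms(2)])
  fix u assume "s \<le> u" "u \<le> t"
  then have "0 < u"
    using assms by linarith
  moreover have "0 \<le> (\<Sum>(j, i)\<in>edges. quadratic_form (K j i) (lag_error j i u))"
    using quadratic_form_lag_error_nonneg by (intro sum_nonneg) auto
  ultimately show "\<exists>y. (lyapunov has_real_derivative y) (at u) \<and> y \<le> 0"
    using lyapunov_has_derivative by force
qed

lemma lyapunov_lower_bound:
  assumes "0 < t"
  shows "(\<Sum>i<n. x i t \<bullet> x i t) / 2 \<le> lyapunov t"
proof -
  have "stored_energy j i (t - T j i) \<le> stored_energy j i t" if "(j, i) \<in> edges" for j i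
  proof (rule DERIV_nonneg_imp_nondecreasing[of "t - T j i" t])
    have link: "link N n j i"
      using that by (simp add: edges_def)
    then show "t - T j i \<le> t"
      using link_delay_bounds by simp
    fix u assume "t - T j i \<le> u" "u \<le> t"
    then have "-\<tau> < u"
      using link_delay_bounds[OF link] assms by linarith
    then show "\<exists>y. (stored_energy j i has_real_derivative y) (at u) \<and> 0 \<le> y"
      using stored_energy_has_derivative[OF link] link_gain_sym_posdef[OF link]
        sym_posdef_quadratic_form_nonneg by blast
  qed
  then have "0 \<le> (\<Sum>(j, i)\<in>edges. stored_energy j i t - stored_energy j i (t - T j i))"
    by (intro sum_nonneg) auto
  then show ?thesis
    by (simp add: lyapunov_def)
qed

lemma lyapunov_nonneg: "0 < t \<Longrightarrow> 0 \<le> lyapunov t"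
  using lyapunov_lower_bound[of t] sum_nonneg[of "{..<n}" "\<lambda>i. x i t \<bullet> x i t"] by simp

lemma states_bounded: "\<exists>M. \<forall>i<n. \<forall>t\<ge>-\<tau>. norm (x i t) \<le> M"
proof -
  have "continuous_on {-\<tau>..1} (x i)" if "i < n" for i
    using cont that continuous_on_subset[of "{-\<tau>..}" "x i" "{-\<tau>..1}"] by auto
  then have "compact (\<Union>i<n. x i ` {-\<tau>..1})"
    by (intro compact_UN compact_continuous_image compact_Icc) auto
  then obtain M0 where "\<And>y. y \<in> (\<Union>i<n. x i ` {-\<tau>..1}) \<Longrightarrow> norm y \<le> M0"
    unfolding compact_eq_bounded_closed bounded_iff by blast
  then have M0: "norm (x i t) \<le> M0" if "i < n" "t \<in> {-\<tau>..1}" for i t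
    using that by blast
  have "norm (x i t) \<le> sqrt (2 * lyapunov 1)" if "i < n" "1 \<le> t" for i t
  proof -
    have "x i t \<bullet> x i t \<le> (\<Sum>i<n. x i t \<bullet> x i t)"
      using that by (intro member_le_sum) auto
    also have "\<dots> \<le> 2 * lyapunov t"
      using lyapunov_lower_bound[of t] that by simp
    also have "\<dots> \<le> 2 * lyapunov 1"
      using lyapunov_antimono[of 1 t] that by simp
    finally show ?thesis
      by (simp add: norm_eq_sqrt_inner)
  qed
  then have "norm (x i t) \<le> max M0 (sqrt (2 * lyapunov 1))" if "i < n" "-\<tau> \<le> t" for i t
    using M0[of i t] that by (cases "t \<le> 1") (auto simp: le_max_iff_disj)
  then show ?thesis
    by blast
qed

lemma drift_bounded: "\<exists>D. \<forall>t>0. norm (drift i t) \<le> D" if "i < n"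
proof -
  obtain M where M: "\<And>i t. i < n \<Longrightarrow> -\<tau> \<le> t \<Longrightarrow> norm (x i t) \<le> M"
    using states_bounded by blast
  have "norm (drift i t) \<le> (\<Sum>j\<in>N i. onorm ((*v) (K j i)) * (2 * M))" if "0 < t" for t
    unfolding drift_def
  proof (rule sum_norm_le)
    fix j assume "j \<in> N i"
    then have link: "link N n j i"
      using \<open>i < n\<close> by (simp add: link_def)
    have "norm (x j (t - T j i) - x i t) \<le> 2 * M"
      using M[of j "t - T j i"] M[of i t] link_nodes[OF link] link_delay_bounds[OF link] \<open>0 < t\<close>
        norm_triangle_ineq4[of "x j (t - T j i)" "x i t"] by simp
    then show "norm (K j i *v (x j (t - T j i) - x i t)) \<le> onorm ((*v) (K j i)) * (2 * M)"
      using onorm[OF matrix_vector_mul_bounded_linear]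
        onorm_pos_le[OF matrix_vector_mul_bounded_linear] by (meson mult_left_mono order_trans)
  qed
  then show ?thesis
    by blast
qed

lemma state_lipschitz_on: "\<exists>L. L-lipschitz_on {0<..} (x i)" if "i < n"
proof -
  obtain D where D: "\<And>t. 0 < t \<Longrightarrow> norm (drift i t) \<le> D"
    using drift_bounded[OF \<open>i < n\<close>] by blast
  have "(max D 0)-lipschitz_on {0<..} (x i)"
    using state_has_derivative[OF \<open>i < n\<close>] D
    by (intro bounded_vector_derivative_imp_lipschitz)
      (auto intro: has_vector_derivative_at_within le_max_iff_disj[THEN iffD2])
  then show ?thesis ..
qed

lemma lag_error_uniformly_continuous:
  assumes "link N n j i"
  shows "uniformly_continuous_on {\<tau> + 1..} (lag_error j i)"
proof -
  obtain Li Lj where Li: "Li-lipschitz_on {0<..} (x i)" and Lj: "Lj-lipschitz_on {0<..} (x j)"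
    using state_lipschitz_on link_nodes[OF assms] by metis
  have T: "0 \<le> T j i" "T j i \<le> \<tau>"
    using link_delay_bounds[OF assms] by auto
  have "Li-lipschitz_on {\<tau> + 1..} (x i)"
    using T by (intro lipschitz_on_subset[OF Li]) auto
  moreover have "Lj-lipschitz_on {\<tau> + 1..} (\<lambda>t. x j (t - T j i))"
  proof (rule lipschitz_onI)
    fix s u :: real assume "s \<in> {\<tau> + 1..}" "u \<in> {\<tau> + 1..}"
    then show "dist (x j (s - T j i)) (x j (u - T j i)) \<le> Lj * dist s u"
      using T lipschitz_onD[OF Lj, of "s - T j i" "u - T j i"] by (simp add: dist_real_def)
  qed (rule lipschitz_on_nonneg[OF Lj])
  ultimately have "(Li + Lj)-lipschitz_on {\<tau> + 1..} (lag_error j i)"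
    unfolding lag_error_def[abs_def] by (rule lipschitz_on_diff)
  then show ?thesis
    by (rule lipschitz_on_uniformly_continuous)
qed

lemma lag_error_tendsto_zero:
  assumes "link N n j i"
  shows "(lag_error j i \<longlongrightarrow> 0) at_top"
proof -
  have e: "(j, i) \<in> edges"
    using assms by (simp add: edges_def)
  have "\<And>v. v \<noteq> 0 \<Longrightarrow> 0 < quadratic_form (K j i) v"
    using link_gain_sym_posdef[OF assms] by (simp add: sym_posdef_def quadratic_form_def)
  then obtain c where "0 < c" and coercive: "\<And>v. c * (norm v)\<^sup>2 \<le> quadratic_form (K j i) v"
    by (rule quadratic_form_coercive) blast+
  have "0 \<le> \<tau>"
    using link_delay_bounds[OF assms] by linarith
  show ?thesis
  proof (rule tendsto_zero_if_dissipation)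
    fix t assume "\<tau> + 1 \<le> t"
    then show "(lyapunov has_real_derivative
        - (\<Sum>(j, i)\<in>edges. quadratic_form (K j i) (lag_error j i t)) / 2) (at t)"
      using \<open>0 \<le> \<tau>\<close> by (intro lyapunov_has_derivative) linarith
    show "0 \<le> lyapunov t"
      using \<open>0 \<le> \<tau>\<close> \<open>\<tau> + 1 \<le> t\<close> by (intro lyapunov_nonneg) linarith
    have "quadratic_form (K j i) (lag_error j i t)
        \<le> (\<Sum>(j, i)\<in>edges. quadratic_form (K j i) (lag_error j i t))"
      using member_le_sum[OF e, of "\<lambda>(j, i). quadratic_form (K j i) (lag_error j i t)"]
        quadratic_form_lag_error_nonneg finite_edges by auto
    then show "- (\<Sum>(j, i)\<in>edges. quadratic_form (K j i) (lag_error j i t)) / 2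
        \<le> - (c / 2) * (norm (lag_error j i t))\<^sup>2"
      using coercive[of "lag_error j i t"] by linarith
  qed (use \<open>0 < c\<close> lag_error_uniformly_continuous[OF assms] in auto)
qed

lemma drift_tendsto_zero:
  assumes "i < n"
  shows "(drift i \<longlongrightarrow> 0) at_top"
  unfolding drift_def
proof (rule tendsto_null_sum)
  fix j assume "j \<in> N i"
  then have "link N n j i"
    using assms by (simp add: link_def)
  then have "((\<lambda>t. K j i *v - lag_error j i t) \<longlongrightarrow> K j i *v - 0) at_top"
    by (intro bounded_linear.tendsto[OF matrix_vector_mul_bounded_linear] tendsto_minus
        lag_error_tendsto_zero)
  then show "((\<lambda>t. K j i *v (x j (t - T j i) - x i t)) \<longlongrightarrow> 0) at_top"
    by (simp add: lag_error_def)
qed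

lemma link_agreement:
  assumes "link N n j i"
  shows "((\<lambda>t. x i t - x j t) \<longlongrightarrow> 0) at_top"
proof -
  have "((\<lambda>t. x j t - x j (t - T j i)) \<longlongrightarrow> 0) at_top"
    using link_nodes[OF assms] link_delay_bounds[OF assms]
    by (intro tendsto_shift_diff_if_derivative_tendsto_zero[of 0 "x j" "drift j"]
        state_has_derivative drift_tendsto_zero) auto
  from tendsto_diff[OF lag_error_tendsto_zero[OF assms] this] show ?thesis
    by (simp add: lag_error_def)
qed

end

theorem theorem3:
  fixes n :: nat
    and N :: "nat \<Rightarrow> nat set"
    and K :: "nat \<Rightarrow> nat \<Rightarrow> real^'m^'m"
    and T :: "nat \<Rightarrow> nat \<Rightarrow> real"
    and \<tau> :: real
    and x :: "nat \<Rightarrow> real \<Rightarrow> real^'m"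
  assumes n_pos: "1 \<le> n"
    and nbrs: "\<forall>i<n. N i \<subseteq> {0..<n} - {i}"
    and gains: "\<forall>i<n. \<forall>j\<in>N i. sym_posdef (K j i)"
    and delays: "\<forall>i<n. \<forall>j\<in>N i. 0 \<le> T j i \<and> T j i \<le> \<tau>"
    and conn: "network_connected N n"
    and links: "admissible_links N n K"
    and cont: "\<forall>i<n. continuous_on {-\<tau>..} (x i)"
    and dyn: "\<forall>i<n. \<forall>t>0.
               (x i has_vector_derivative
                  (\<Sum>j\<in>N i. K j i *v (x j (t - T j i) - x i t))) (at t)"
  shows "\<forall>i<n. \<forall>j<n. ((\<lambda>t. x i t - x j t) \<longlongrightarrow> 0) at_top"
proof -
  interpret delayed_network n N K T \<tau> x
    using nbrs gains delays links cont dyn by unfold_locales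
  show ?thesis
  proof (intro allI impI)
    fix i j assume "i < n" "j < n"
    then have "(\<lambda>a b. link N n b a \<or> link N n a b)\<^sup>*\<^sup>* i j"
      using conn by (simp add: network_connected_def disj_commute)
    then show "((\<lambda>t. x i t - x j t) \<longlongrightarrow> 0) at_top"
      by (rule tendsto_diff_zero_along_symmetric_path) (rule link_agreement)
  qed
qed

end
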